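(* Let $\mathcal{M}\in\mathbb{R}^{n\times n}$ be a Hurwitz matrix and let $\mu>0$. Let $P$ be the unique symmetric positive definite solution of $P\mathcal{M}+\mathcal{M}^TP=-2\mu I_n$. Then $$\bar{\sigma}(P)\,\bar{\sigma}(\mathcal{M})\le-\mu \quad\text{and}\quad \bar{\sigma}(P)\,\bar{\sigma}(\mathcal{M}+\mathcal{M}^* )\ge -2\mu.$$ In particular, if $\mathcal{M}$ is Hermitian (i.e. symmetric), then $\bar{\sigma}(P)\,\bar{\sigma}(\mathcal{M})=-\mu$.
   Context: $\bar{\sigma}(X)$ denotes the maximum real part of the eigenvalues of a square matrix $X$ (for a Hermitian matrix, its largest eigenvalue). $\mathcal{M}^*$ is the conjugate transpose of $\mathcal{M}$ (here equal to $\mathcal{M}^T$). A matrix is Hurwitz if all its eigenvalues have negative real part. *)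

theory Defs
  imports "Jordan_Normal_Form.Spectral_Radius"
begin

definition cspec :: "real mat \<Rightarrow> complex set" where
  "cspec A = spectrum (map_mat complex_of_real A)"

definition sigma_bar :: "real mat \<Rightarrow> real" where
  "sigma_bar A = Max (Re ` cspec A)"

definition hurwitz :: "real mat \<Rightarrow> bool" where
  "hurwitz A \<longleftrightarrow> (\<forall>l \<in> cspec A. Re l < 0)"

definition sym_pos_def :: "nat \<Rightarrow> real mat \<Rightarrow> bool" where
  "sym_pos_def n P \<longleftrightarrow> P \<in> carrier_mat n n \<and> transpose_mat P = P \<and>
     (\<forall>x \<in> carrier_vec n. x \<noteq> 0\<^sub>v n \<longrightarrow> x \<bullet> (P *\<^sub>v x) > 0)"

end

theory Submission
  imports Defs "HOL-Analysis.Function_Topology"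
begin

(* For symmetric P, sigma_bar P is the maximum of the Rayleigh quotient x.Px / x.x, attained
   at a unit eigenvector x0 (compactness of the unit sphere plus a first-order perturbation
   argument). Testing the Lyapunov equation against x gives (Px).(Mx) = -mu |x|^2.
   For a complex eigenvalue l of M with eigenvector a + ib this yields
   Re l (a.Pa + b.Pb) = -mu (|a|^2 + |b|^2); since a.Pa + b.Pb <= sigma_bar P (|a|^2 + |b|^2)
   and Re l < 0, we get sigma_bar P * Re l <= -mu. At x0 it yields sigma_bar P (x0.Mx0) = -mu,
   while 2 x0.Mx0 = x0.(M + M^T)x0 <= sigma_bar (M + M^T), and x0.Mx0 <= sigma_bar M
   when M is symmetric. *)

lemma scalar_prod_self_nonneg: "0 \<le> (x :: real vec) \<bullet> x"
  using conjugate_square_ge_0_vec[of x] by simp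

lemma scalar_prod_self_eq_0_iff:
  "(x :: real vec) \<in> carrier_vec n \<Longrightarrow> x \<bullet> x = 0 \<longleftrightarrow> x = 0\<^sub>v n"
  using conjugate_square_eq_0_vec[of x n] by simp

lemma quadratic_form_transpose:
  fixes A :: "'a :: comm_semiring_0 mat"
  assumes "A \<in> carrier_mat n n" "x \<in> carrier_vec n"
  shows "x \<bullet> (transpose_mat A *\<^sub>v x) = x \<bullet> (A *\<^sub>v x)"
  using transpose_vec_mult_scalar[of A n n x x] comm_scalar_prod[of x n] assms by simp

lemma smult_mat_mult_vec:
  fixes A :: "'a :: comm_ring_1 mat"
  assumes "A \<in> carrier_mat nr nc" "x \<in> carrier_vec nc"
  shows "(k \<cdot>\<^sub>m A) *\<^sub>v x = k \<cdot>\<^sub>v (A *\<^sub>v x)"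
  by (rule eq_vecI) (use assms in \<open>auto simp: smult_scalar_prod_distrib[of _ nc]\<close>)

lemma quadratic_form_expand:
  fixes B :: "real mat"
  assumes B: "B \<in> carrier_mat n n" "transpose_mat B = B"
    and x: "x \<in> carrier_vec n" and y: "y \<in> carrier_vec n"
  shows "(x + t \<cdot>\<^sub>v y) \<bullet> (B *\<^sub>v (x + t \<cdot>\<^sub>v y))
     = x \<bullet> (B *\<^sub>v x) + 2 * t * (y \<bullet> (B *\<^sub>v x)) + t\<^sup>2 * (y \<bullet> (B *\<^sub>v y))"
proof -
  have "x \<bullet> (B *\<^sub>v y) = y \<bullet> (B *\<^sub>v x)"
    using transpose_vec_mult_scalar[of B n n y x] comm_scalar_prod[of "B *\<^sub>v x" n y] B x y
    by simp
  with B x y show ?thesis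
    by (simp add: mult_add_distrib_mat_vec mult_mat_vec add_scalar_prod_distrib[of _ n]
        scalar_prod_add_distrib[of _ n] power2_eq_square algebra_simps)
qed

lemma nonpos_of_perturbation_nonpos:
  fixes a b :: real
  assumes "\<And>t. t > 0 \<Longrightarrow> a + t * b \<le> 0"
  shows "a \<le> 0"
proof (rule ccontr)
  assume "\<not> a \<le> 0"
  define t where "t = a / (\<bar>b\<bar> + 1)"
  have "t > 0" and "t * \<bar>b\<bar> < a"
    using \<open>\<not> a \<le> 0\<close> by (simp_all add: t_def field_simps)
  moreover have "- (t * \<bar>b\<bar>) \<le> t * b"
    using \<open>t > 0\<close> by (simp add: abs_if)
  ultimately show False
    using assms[of t] by linarith
qed

(* Vectors carry no topology, so the unit sphere of R^n is modelled in the product space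
   nat => real. *)
lemma compact_unit_sphere_fun:
  "compact {f :: nat \<Rightarrow> real. (\<forall>i\<ge>n. f i = 0) \<and> (\<Sum>i<n. (f i)\<^sup>2) = 1}"
    (is "compact ?S")
proof -
  define K where "K = (\<Pi>\<^sub>E i\<in>UNIV. if i < n then {-1..1::real} else {0})"
  have "compactin (product_topology (\<lambda>_. euclideanreal) UNIV) K"
    unfolding K_def by (subst compactin_PiE) auto
  then have K: "compact K"
    by (metis compactin_euclidean_iff euclidean_product_topology)
  have S: "closed ?S"
    by (intro closed_Collect_conj closed_Collect_all closed_Collect_imp closed_Collect_eq
        continuous_intros) auto
  have "?S \<subseteq> K"
  proof
    fix f assume f: "f \<in> ?S"
    have "\<bar>f i\<bar> \<le> 1" if "i < n" for i
    proof -
      have "(f i)\<^sup>2 \<le> (\<Sum>j<n. (f j)\<^sup>2)"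
        using that by (intro member_le_sum) auto
      with f show ?thesis by (simp add: abs_square_le_1)
    qed
    with f show "f \<in> K" by (auto simp: K_def PiE_def extensional_def abs_le_iff)
  qed
  then show ?thesis
    using compact_Int_closed[OF K S] by (simp add: Int_absorb1)
qed

lemma quadratic_form_attains_max_on_unit_sphere:
  fixes A :: "real mat"
  assumes A: "A \<in> carrier_mat n n" and n: "n > 0"
  obtains x0 where "x0 \<in> carrier_vec n" "x0 \<bullet> x0 = 1"
    "\<And>x. x \<in> carrier_vec n \<Longrightarrow> x \<bullet> x = 1 \<Longrightarrow> x \<bullet> (A *\<^sub>v x) \<le> x0 \<bullet> (A *\<^sub>v x0)"
proof -
  define S where "S = {f :: nat \<Rightarrow> real. (\<forall>i\<ge>n. f i = 0) \<and> (\<Sum>i<n. (f i)\<^sup>2) = 1}"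
  define g where "g f = vec n f \<bullet> (A *\<^sub>v vec n f)" for f :: "nat \<Rightarrow> real"
  have norm_vec: "vec n f \<bullet> vec n f = (\<Sum>i<n. (f i)\<^sup>2)" for f :: "nat \<Rightarrow> real"
    by (simp add: scalar_prod_def lessThan_atLeast0 power2_eq_square)
  have "(\<Sum>i<n. (if i = 0 then 1 else 0 :: real)\<^sup>2) = (\<Sum>i<n. if i = 0 then 1 else 0)"
    by (rule sum.cong) simp_all
  with n have "(\<lambda>i. if i = 0 then 1 else 0) \<in> S"
    by (simp add: S_def)
  then have "S \<noteq> {}" by blast
  moreover have "continuous_on S g"
  proof -
    have "g = (\<lambda>f. \<Sum>i<n. f i * (\<Sum>j<n. A $$ (i, j) * f j))"
      using A by (auto simp: g_def scalar_prod_def row_def lessThan_atLeast0)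
    moreover have "continuous_on S (\<lambda>f :: nat \<Rightarrow> real. f i)" for i
      by (rule continuous_on_subset[OF continuous_on_product_coordinates]) auto
    ultimately show ?thesis
      by (simp add: continuous_intros)
  qed
  ultimately obtain f0 where f0: "f0 \<in> S" and max: "\<And>f. f \<in> S \<Longrightarrow> g f \<le> g f0"
    using continuous_attains_sup[OF compact_unit_sphere_fun[of n, folded S_def]] by blast
  show ?thesis
  proof
    show "vec n f0 \<in> carrier_vec n" by simp
    show "vec n f0 \<bullet> vec n f0 = 1" using f0 norm_vec by (simp add: S_def)
    fix x :: "real vec" assume x: "x \<in> carrier_vec n" and "x \<bullet> x = 1"
    define f where "f i = (if i < n then x $ i else 0)" for i
    have "vec n f = x"
      using x by (auto simp: f_def)
    with \<open>x \<bullet> x = 1\<close> have "f \<in> S"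
      using norm_vec[of f] by (simp add: S_def f_def)
    with \<open>vec n f = x\<close> max show "x \<bullet> (A *\<^sub>v x) \<le> vec n f0 \<bullet> (A *\<^sub>v vec n f0)"
      unfolding g_def by metis
  qed
qed

lemma quadratic_form_le_of_unit_sphere:
  fixes A :: "real mat"
  assumes A: "A \<in> carrier_mat n n"
    and unit: "\<And>y. y \<in> carrier_vec n \<Longrightarrow> y \<bullet> y = 1 \<Longrightarrow> y \<bullet> (A *\<^sub>v y) \<le> c"
    and x: "x \<in> carrier_vec n"
  shows "x \<bullet> (A *\<^sub>v x) \<le> c * (x \<bullet> x)"
proof (cases "x = 0\<^sub>v n")
  case True
  with A show ?thesis by simp
next
  case False
  with x have pos: "x \<bullet> x > 0"
    using scalar_prod_self_nonneg[of x] scalar_prod_self_eq_0_iff[OF x] by linarith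
  define r where "r = 1 / sqrt (x \<bullet> x)"
  have r2: "r * r = 1 / (x \<bullet> x)"
    using pos by (simp add: r_def)
  have "(x \<bullet> (A *\<^sub>v x)) / (x \<bullet> x) = (r \<cdot>\<^sub>v x) \<bullet> (A *\<^sub>v (r \<cdot>\<^sub>v x))"
    using A x by (simp add: mult_mat_vec[OF A x] r2 flip: mult.assoc)
  also have "\<dots> \<le> c"
    using x pos by (intro unit) (auto simp: r2 simp flip: mult.assoc)
  finally show ?thesis
    using pos by (simp add: pos_divide_le_eq)
qed

lemma symmetric_form_maximizer_eigenvector:
  fixes A :: "real mat"
  assumes A: "A \<in> carrier_mat n n" "transpose_mat A = A"
    and bound: "\<And>y. y \<in> carrier_vec n \<Longrightarrow> y \<bullet> (A *\<^sub>v y) \<le> c * (y \<bullet> y)"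
    and x: "x \<in> carrier_vec n" and attained: "x \<bullet> (A *\<^sub>v x) = c * (x \<bullet> x)"
  shows "A *\<^sub>v x = c \<cdot>\<^sub>v x"
proof -
  \<comment> \<open>Moving x along the residual y raises x.Ax - c x.x by 2 t |y|^2 to first order.\<close>
  define y where "y = A *\<^sub>v x - c \<cdot>\<^sub>v x"
  have y: "y \<in> carrier_vec n"
    using A x by (simp add: y_def)
  have yAx: "y \<bullet> (A *\<^sub>v x) = y \<bullet> y + c * (y \<bullet> x)"
    using A x y by (subst (2) y_def) (simp add: scalar_prod_minus_distrib[of _ n])
  have "2 * (y \<bullet> y) + t * (y \<bullet> (A *\<^sub>v y) - c * (y \<bullet> y)) \<le> 0" if "t > 0" for t
  proof -
    have "(x + t \<cdot>\<^sub>v y) \<bullet> (x + t \<cdot>\<^sub>v y) = x \<bullet> x + 2 * t * (y \<bullet> x) + t\<^sup>2 * (y \<bullet> y)"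
      using quadratic_form_expand[of "1\<^sub>m n" n x y t] x y by simp
    then have "x \<bullet> (A *\<^sub>v x) + 2 * t * (y \<bullet> (A *\<^sub>v x)) + t\<^sup>2 * (y \<bullet> (A *\<^sub>v y))
        \<le> c * (x \<bullet> x + 2 * t * (y \<bullet> x) + t\<^sup>2 * (y \<bullet> y))"
      using bound[of "x + t \<cdot>\<^sub>v y"] quadratic_form_expand[OF A x y, of t] x y by simp
    then have "t * (2 * (y \<bullet> y) + t * (y \<bullet> (A *\<^sub>v y) - c * (y \<bullet> y))) \<le> 0"
      unfolding attained yAx by (simp add: power2_eq_square algebra_simps)
    with that show ?thesis
      by (simp add: mult_le_0_iff)
  qed
  then have "2 * (y \<bullet> y) \<le> 0"
    by (rule nonpos_of_perturbation_nonpos)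
  then have "y = 0\<^sub>v n"
    using y scalar_prod_self_nonneg[of y] scalar_prod_self_eq_0_iff[OF y] by simp
  show ?thesis
  proof (rule eq_vecI)
    fix i assume "i < dim_vec (c \<cdot>\<^sub>v x)"
    with x have "i < n" by simp
    with \<open>y = 0\<^sub>v n\<close> A x show "(A *\<^sub>v x) $ i = (c \<cdot>\<^sub>v x) $ i"
      using arg_cong[OF y_def, of "\<lambda>v. v $ i"] by simp
  qed (use A x in simp)
qed

lemma finite_cspec: "A \<in> carrier_mat n n \<Longrightarrow> finite (cspec A)"
  using card_finite_spectrum(1)[of "map_mat complex_of_real A" n] by (simp add: cspec_def)

lemma real_eigenvalue_in_cspec:
  assumes "A \<in> carrier_mat n n" "eigenvalue A c"
  shows "complex_of_real c \<in> cspec A"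
  using of_real_hom.eigenvalue_hom[OF assms] unfolding cspec_def spectrum_def by simp

lemma cspec_real_eigenvector_pair:
  fixes A :: "real mat"
  assumes A: "A \<in> carrier_mat n n" and l: "l \<in> cspec A"
  obtains a b where "a \<in> carrier_vec n" "b \<in> carrier_vec n" "a \<bullet> a + b \<bullet> b > 0"
    "A *\<^sub>v a = Re l \<cdot>\<^sub>v a - Im l \<cdot>\<^sub>v b" "A *\<^sub>v b = Im l \<cdot>\<^sub>v a + Re l \<cdot>\<^sub>v b"
proof -
  obtain v where v: "v \<in> carrier_vec n" and "v \<noteq> 0\<^sub>v n"
    and ev: "map_mat complex_of_real A *\<^sub>v v = l \<cdot>\<^sub>v v"
    using l A unfolding cspec_def spectrum_def eigenvalue_def eigenvector_def by auto
  define a where "a = map_vec Re v"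
  define b where "b = map_vec Im v"
  have a: "a \<in> carrier_vec n" and b: "b \<in> carrier_vec n"
    using v by (auto simp: a_def b_def)
  have row: "(\<Sum>j=0..<n. complex_of_real (A $$ (i, j)) * v $ j) = l * v $ i" if "i < n" for i
    using arg_cong[OF ev, of "\<lambda>w. w $ i"] that A v by (simp add: scalar_prod_def row_def)
  have "A *\<^sub>v a = Re l \<cdot>\<^sub>v a - Im l \<cdot>\<^sub>v b"
  proof (rule eq_vecI)
    fix i assume "i < dim_vec (Re l \<cdot>\<^sub>v a - Im l \<cdot>\<^sub>v b)"
    with b have i: "i < n" by simp
    from arg_cong[OF row[OF i], of Re]
    show "(A *\<^sub>v a) $ i = (Re l \<cdot>\<^sub>v a - Im l \<cdot>\<^sub>v b) $ i"
      using i A v by (simp add: a_def b_def scalar_prod_def row_def Re_sum)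
  qed (use A b in simp)
  moreover have "A *\<^sub>v b = Im l \<cdot>\<^sub>v a + Re l \<cdot>\<^sub>v b"
  proof (rule eq_vecI)
    fix i assume "i < dim_vec (Im l \<cdot>\<^sub>v a + Re l \<cdot>\<^sub>v b)"
    with b have i: "i < n" by simp
    from arg_cong[OF row[OF i], of Im]
    show "(A *\<^sub>v b) $ i = (Im l \<cdot>\<^sub>v a + Re l \<cdot>\<^sub>v b) $ i"
      using i A v by (simp add: a_def b_def scalar_prod_def row_def Im_sum)
  qed (use A b in simp)
  moreover have "a \<bullet> a + b \<bullet> b > 0"
  proof (rule ccontr)
    assume "\<not> a \<bullet> a + b \<bullet> b > 0"
    then have "a = 0\<^sub>v n" "b = 0\<^sub>v n"
      using scalar_prod_self_nonneg[of a] scalar_prod_self_nonneg[of b]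
        scalar_prod_self_eq_0_iff[OF a] scalar_prod_self_eq_0_iff[OF b] by linarith+
    have "v $ i = 0" if "i < n" for i
    proof -
      have "Re (v $ i) = a $ i" "Im (v $ i) = b $ i"
        using that v by (simp_all add: a_def b_def)
      with \<open>a = 0\<^sub>v n\<close> \<open>b = 0\<^sub>v n\<close> that show ?thesis
        by (simp add: complex_eq_iff)
    qed
    with v have "v = 0\<^sub>v n"
      by (intro eq_vecI) auto
    with \<open>v \<noteq> 0\<^sub>v n\<close> show False ..
  qed
  ultimately show ?thesis
    using a b that by blast
qed

lemma rotation_pair_form_identity:
  fixes A Q :: "real mat"
  assumes Q: "Q \<in> carrier_mat n n" "transpose_mat Q = Q"
    and a: "a \<in> carrier_vec n" and b: "b \<in> carrier_vec n"
    and ea: "A *\<^sub>v a = \<alpha> \<cdot>\<^sub>v a - \<beta> \<cdot>\<^sub>v b" and eb: "A *\<^sub>v b = \<beta> \<cdot>\<^sub>v a + \<alpha> \<cdot>\<^sub>v b"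
  shows "(Q *\<^sub>v a) \<bullet> (A *\<^sub>v a) + (Q *\<^sub>v b) \<bullet> (A *\<^sub>v b) = \<alpha> * (a \<bullet> (Q *\<^sub>v a) + b \<bullet> (Q *\<^sub>v b))"
proof -
  have Qa: "Q *\<^sub>v a \<in> carrier_vec n" and Qb: "Q *\<^sub>v b \<in> carrier_vec n"
    using Q a b by auto
  have "(Q *\<^sub>v a) \<bullet> (A *\<^sub>v a) = \<alpha> * (a \<bullet> (Q *\<^sub>v a)) - \<beta> * ((Q *\<^sub>v a) \<bullet> b)"
    unfolding ea using a b Qa comm_scalar_prod[OF Qa a]
    by (simp add: scalar_prod_minus_distrib[of _ n])
  moreover have "(Q *\<^sub>v b) \<bullet> (A *\<^sub>v b) = \<beta> * ((Q *\<^sub>v b) \<bullet> a) + \<alpha> * (b \<bullet> (Q *\<^sub>v b))"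
    unfolding eb using a b Qb comm_scalar_prod[OF Qb b]
    by (simp add: scalar_prod_add_distrib[of _ n])
  moreover have "(Q *\<^sub>v b) \<bullet> a = (Q *\<^sub>v a) \<bullet> b"
    using transpose_vec_mult_scalar[OF Q(1) a b] comm_scalar_prod[OF b Qa] Q by simp
  ultimately show ?thesis
    by (simp add: algebra_simps)
qed

lemma Re_cspec_le_of_form_bound:
  fixes A :: "real mat"
  assumes A: "A \<in> carrier_mat n n"
    and bound: "\<And>x. x \<in> carrier_vec n \<Longrightarrow> x \<bullet> (A *\<^sub>v x) \<le> c * (x \<bullet> x)"
    and l: "l \<in> cspec A"
  shows "Re l \<le> c"
proof -
  obtain a b where a: "a \<in> carrier_vec n" and b: "b \<in> carrier_vec n" and pos: "a \<bullet> a + b \<bullet> b > 0"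
    and ea: "A *\<^sub>v a = Re l \<cdot>\<^sub>v a - Im l \<cdot>\<^sub>v b" and eb: "A *\<^sub>v b = Im l \<cdot>\<^sub>v a + Re l \<cdot>\<^sub>v b"
    using cspec_real_eigenvector_pair[OF A l] .
  from rotation_pair_form_identity[where Q = "1\<^sub>m n", OF _ _ a b ea eb]
  have "Re l * (a \<bullet> a + b \<bullet> b) = a \<bullet> (A *\<^sub>v a) + b \<bullet> (A *\<^sub>v b)"
    using a b by simp
  also have "\<dots> \<le> c * (a \<bullet> a + b \<bullet> b)"
    using bound[OF a] bound[OF b] by (simp add: distrib_left)
  finally show ?thesis
    using pos by simp
qed

lemma sigma_bar_attained:
  assumes "A \<in> carrier_mat n n" "n > 0"
  obtains l where "l \<in> cspec A" "sigma_bar A = Re l"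
proof -
  have "cspec A \<noteq> {}"
    using spectrum_non_empty[of "map_mat complex_of_real A" n] assms by (simp add: cspec_def)
  with finite_cspec[OF assms(1)] have "sigma_bar A \<in> Re ` cspec A"
    unfolding sigma_bar_def by (intro Max_in) auto
  with that show ?thesis
    by blast
qed

lemma sigma_bar_symmetric_eigenvector:
  fixes A :: "real mat"
  assumes A: "A \<in> carrier_mat n n" "transpose_mat A = A" and n: "n > 0"
  obtains x0 where "x0 \<in> carrier_vec n" "x0 \<bullet> x0 = 1" "A *\<^sub>v x0 = sigma_bar A \<cdot>\<^sub>v x0"
    "\<And>x. x \<in> carrier_vec n \<Longrightarrow> x \<bullet> (A *\<^sub>v x) \<le> sigma_bar A * (x \<bullet> x)"
proof -
  obtain x0 where x0: "x0 \<in> carrier_vec n" and unit: "x0 \<bullet> x0 = 1"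
    and max: "\<And>x. x \<in> carrier_vec n \<Longrightarrow> x \<bullet> x = 1 \<Longrightarrow> x \<bullet> (A *\<^sub>v x) \<le> x0 \<bullet> (A *\<^sub>v x0)"
    using quadratic_form_attains_max_on_unit_sphere[OF A(1) n] by blast
  define c where "c = x0 \<bullet> (A *\<^sub>v x0)"
  have bound: "x \<bullet> (A *\<^sub>v x) \<le> c * (x \<bullet> x)" if "x \<in> carrier_vec n" for x
    using quadratic_form_le_of_unit_sphere[OF A(1) max that] by (simp add: c_def)
  have ev: "A *\<^sub>v x0 = c \<cdot>\<^sub>v x0"
    using symmetric_form_maximizer_eigenvector[OF A bound x0] unit by (simp add: c_def)
  have "x0 \<noteq> 0\<^sub>v n"
    using unit by auto
  with A x0 ev have "complex_of_real c \<in> cspec A"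
    by (intro real_eigenvalue_in_cspec) (auto simp: eigenvalue_def eigenvector_def)
  have "sigma_bar A = c"
    unfolding sigma_bar_def
  proof (rule Max_eqI)
    show "finite (Re ` cspec A)"
      using finite_cspec[OF A(1)] by simp
    show "y \<le> c" if "y \<in> Re ` cspec A" for y
      using that Re_cspec_le_of_form_bound[OF A(1) bound] by auto
    show "c \<in> Re ` cspec A"
      using \<open>complex_of_real c \<in> cspec A\<close> by force
  qed
  with x0 unit ev bound show ?thesis
    using that by simp
qed

lemma quadratic_form_le_sigma_bar:
  fixes A :: "real mat"
  assumes "A \<in> carrier_mat n n" "transpose_mat A = A" "n > 0" "x \<in> carrier_vec n"
  shows "x \<bullet> (A *\<^sub>v x) \<le> sigma_bar A * (x \<bullet> x)"
  using sigma_bar_symmetric_eigenvector[OF assms(1-3)] assms(4) by metis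

lemma two_quadratic_form_le_sigma_bar_add_transpose:
  fixes M :: "real mat"
  assumes M: "M \<in> carrier_mat n n" and n: "n > 0" and x: "x \<in> carrier_vec n"
  shows "2 * (x \<bullet> (M *\<^sub>v x)) \<le> sigma_bar (M + transpose_mat M) * (x \<bullet> x)"
proof -
  have "x \<bullet> ((M + transpose_mat M) *\<^sub>v x) = 2 * (x \<bullet> (M *\<^sub>v x))"
    using M x quadratic_form_transpose[OF M x]
    by (simp add: add_mult_distrib_mat_vec[of _ n n] scalar_prod_add_distrib[of _ n])
  moreover have "transpose_mat (M + transpose_mat M) = M + transpose_mat M"
    using M by (simp add: transpose_add comm_add_mat[of _ n n])
  ultimately show ?thesis
    using quadratic_form_le_sigma_bar[of "M + transpose_mat M" n x] M n x by simp
qed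

lemma sigma_bar_pos_if_sym_pos_def:
  assumes n: "n > 0" and P: "sym_pos_def n P"
  shows "sigma_bar P > 0"
proof -
  from P have P_mat: "P \<in> carrier_mat n n" "transpose_mat P = P"
    unfolding sym_pos_def_def by auto
  obtain x0 where x0: "x0 \<in> carrier_vec n" "x0 \<bullet> x0 = 1" and "P *\<^sub>v x0 = sigma_bar P \<cdot>\<^sub>v x0"
    using sigma_bar_symmetric_eigenvector[OF P_mat n] by blast
  moreover have "x0 \<noteq> 0\<^sub>v n"
    using x0 by auto
  ultimately show ?thesis
    using P x0 unfolding sym_pos_def_def by force
qed

lemma lyapunov_form:
  fixes P M :: "real mat"
  assumes P: "P \<in> carrier_mat n n" "transpose_mat P = P" and M: "M \<in> carrier_mat n n"
    and x: "x \<in> carrier_vec n"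
  shows "x \<bullet> ((P * M + transpose_mat M * P) *\<^sub>v x) = 2 * ((P *\<^sub>v x) \<bullet> (M *\<^sub>v x))"
proof -
  have Mx: "M *\<^sub>v x \<in> carrier_vec n" and Px: "P *\<^sub>v x \<in> carrier_vec n"
    using M P x by auto
  have "x \<bullet> (P *\<^sub>v (M *\<^sub>v x)) = (P *\<^sub>v x) \<bullet> (M *\<^sub>v x)"
    using transpose_vec_mult_scalar[OF P(1) Mx x] P by simp
  moreover have "x \<bullet> (transpose_mat M *\<^sub>v (P *\<^sub>v x)) = (P *\<^sub>v x) \<bullet> (M *\<^sub>v x)"
    using transpose_vec_mult_scalar[OF M x Px] comm_scalar_prod[OF Mx Px]
      comm_scalar_prod[of x n "transpose_mat M *\<^sub>v (P *\<^sub>v x)"] M Px x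
    by simp
  ultimately show ?thesis
    using P M x Mx Px
    by (simp add: add_mult_distrib_mat_vec[of _ n n] scalar_prod_add_distrib[of _ n])
qed

lemma lyapunov_Re_eigenvalue_bound:
  fixes P M :: "real mat"
  assumes P: "P \<in> carrier_mat n n" "transpose_mat P = P" and M: "M \<in> carrier_mat n n"
    and P_bound: "\<And>x. x \<in> carrier_vec n \<Longrightarrow> x \<bullet> (P *\<^sub>v x) \<le> s * (x \<bullet> x)"
    and lyap: "\<And>x. x \<in> carrier_vec n \<Longrightarrow> (P *\<^sub>v x) \<bullet> (M *\<^sub>v x) = - \<mu> * (x \<bullet> x)"
    and l: "l \<in> cspec M" and stable: "Re l < 0"
  shows "s * Re l \<le> - \<mu>"
proof -
  obtain a b where a: "a \<in> carrier_vec n" and b: "b \<in> carrier_vec n" and pos: "a \<bullet> a + b \<bullet> b > 0"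
    and ea: "M *\<^sub>v a = Re l \<cdot>\<^sub>v a - Im l \<cdot>\<^sub>v b" and eb: "M *\<^sub>v b = Im l \<cdot>\<^sub>v a + Re l \<cdot>\<^sub>v b"
    using cspec_real_eigenvector_pair[OF M l] .
  have "- \<mu> * (a \<bullet> a + b \<bullet> b) = Re l * (a \<bullet> (P *\<^sub>v a) + b \<bullet> (P *\<^sub>v b))"
    using rotation_pair_form_identity[OF P a b ea eb] lyap[OF a] lyap[OF b]
    by (simp add: algebra_simps)
  also have "\<dots> \<ge> Re l * (s * (a \<bullet> a + b \<bullet> b))"
    using P_bound[OF a] P_bound[OF b] stable by (intro mult_left_mono_neg) (auto simp: distrib_left)
  finally have "(s * Re l) * (a \<bullet> a + b \<bullet> b) \<le> - \<mu> * (a \<bullet> a + b \<bullet> b)"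
    by (simp add: algebra_simps)
  with pos show ?thesis
    by (metis mult_le_cancel_right_pos mult_minus_left)
qed

theorem lemma5:
  fixes M P :: "real mat" and n :: nat and \<mu> :: real
  assumes "n > 0"
    and "M \<in> carrier_mat n n"
    and "hurwitz M"
    and "\<mu> > 0"
    and "sym_pos_def n P"
    and "P * M + transpose_mat M * P = (- 2 * \<mu>) \<cdot>\<^sub>m 1\<^sub>m n"
  shows "sigma_bar P * sigma_bar M \<le> - \<mu>
    \<and> sigma_bar P * sigma_bar (M + transpose_mat M) \<ge> - 2 * \<mu>
    \<and> (transpose_mat M = M \<longrightarrow> sigma_bar P * sigma_bar M = - \<mu>)"
proof -
  note n = assms(1) and M = assms(2)
  from assms(5) have P: "P \<in> carrier_mat n n" "transpose_mat P = P"
    unfolding sym_pos_def_def by auto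
  have s_pos: "sigma_bar P > 0"
    using sigma_bar_pos_if_sym_pos_def[OF n assms(5)] .
  have lyap: "(P *\<^sub>v x) \<bullet> (M *\<^sub>v x) = - \<mu> * (x \<bullet> x)" if "x \<in> carrier_vec n" for x
    using lyapunov_form[OF P M that] assms(6) that by (simp add: smult_mat_mult_vec[of _ n n])
  obtain l where "l \<in> cspec M" "sigma_bar M = Re l"
    using sigma_bar_attained[OF M n] .
  with lyapunov_Re_eigenvalue_bound[OF P M quadratic_form_le_sigma_bar[OF P n] lyap] assms(3)
  have le_M: "sigma_bar P * sigma_bar M \<le> - \<mu>"
    unfolding hurwitz_def by auto
  obtain x0 where x0: "x0 \<in> carrier_vec n" "x0 \<bullet> x0 = 1" and "P *\<^sub>v x0 = sigma_bar P \<cdot>\<^sub>v x0"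
    using sigma_bar_symmetric_eigenvector[OF P n] by blast
  with lyap[OF x0(1)] M have x0_M: "sigma_bar P * (x0 \<bullet> (M *\<^sub>v x0)) = - \<mu>"
    by simp
  have "sigma_bar P * (2 * (x0 \<bullet> (M *\<^sub>v x0))) \<le> sigma_bar P * sigma_bar (M + transpose_mat M)"
    using two_quadratic_form_le_sigma_bar_add_transpose[OF M n x0(1)] x0(2) s_pos
    by (intro mult_left_mono) auto
  with x0_M have ge_sym_part: "sigma_bar P * sigma_bar (M + transpose_mat M) \<ge> - 2 * \<mu>"
    by (simp add: algebra_simps)
  have "sigma_bar P * (x0 \<bullet> (M *\<^sub>v x0)) \<le> sigma_bar P * sigma_bar M" if "transpose_mat M = M"
    using quadratic_form_le_sigma_bar[OF M that n x0(1)] x0(2) s_pos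
    by (intro mult_left_mono) auto
  with le_M ge_sym_part x0_M show ?thesis
    by auto
qed

end
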